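(* Let $k,t$ be positive integers with $t\geq k$. Let $D'$ be an $n$-vertex digraph and $\sigma$ an ordering of $V(D')$ such that $D'$ is $(\sigma,k,t)$-good. Then for every set $S \subseteq V(D')$ of $k-1$ vertices and every $v \in V(D')\setminus S$, there exist a directed path in $D'-S$ from $v$ to a vertex of $\sigma(n-t+1,n)$ and a directed path in $D'-S$ from a vertex of $\sigma(1,t)$ to $v$.
   Context: For an ordering $\sigma = (v_1,\dots, v_n)$ of the vertices of a digraph, an arc from $v_i$ to $v_j$ is $\sigma$-forward if $i<j$. For integers $a,b$, $\sigma(a,b) := \{ v_{\ell} : a\leq \ell \leq b, \ell \in \{1,\dots,n\}\}$. For positive integers $k,t$, an $n$-vertex digraph $D$ with ordering $\sigma$ of $V(D)$ is $(\sigma,k,t)$-good if: (D1) every arc of $D$ is $\sigma$-forward; (D2) every vertex in $\sigma(1,n-t)$ has out-degree at least $k$ in $D$; (D3) every vertex in $\sigma(t+1,n)$ has in-degree at least $k$ in $D$. A path may consist of a single vertex. $D'-S$ denotes the digraph obtained by deleting $S$. *)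

theory Defs
  imports Main
begin

text \<open>An ordering sigma of V is a list of the vertices, each exactly once;
  sigma ! (i-1) is the vertex v_i.\<close>

definition digraph :: "'a set \<Rightarrow> ('a \<times> 'a) set \<Rightarrow> bool" where
  "digraph V A \<longleftrightarrow> finite V \<and> A \<subseteq> V \<times> V"

definition is_ordering :: "'a list \<Rightarrow> 'a set \<Rightarrow> bool" where
  "is_ordering sigma V \<longleftrightarrow> distinct sigma \<and> set sigma = V"

definition out_deg :: "('a \<times> 'a) set \<Rightarrow> 'a \<Rightarrow> nat" where
  "out_deg A v = card {w. (v, w) \<in> A}"

definition in_deg :: "('a \<times> 'a) set \<Rightarrow> 'a \<Rightarrow> nat" where
  "in_deg A v = card {u. (u, v) \<in> A}"

definition seg :: "'a list \<Rightarrow> int \<Rightarrow> int \<Rightarrow> 'a set" where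
  "seg sigma a b = {sigma ! nat (l - 1) | l. a \<le> l \<and> l \<le> b \<and> 1 \<le> l \<and> l \<le> int (length sigma)}"

definition forward :: "'a list \<Rightarrow> 'a \<Rightarrow> 'a \<Rightarrow> bool" where
  "forward sigma x y \<longleftrightarrow> (\<exists>i j. i < j \<and> j < length sigma \<and> sigma ! i = x \<and> sigma ! j = y)"

definition good :: "'a set \<Rightarrow> ('a \<times> 'a) set \<Rightarrow> 'a list \<Rightarrow> nat \<Rightarrow> nat \<Rightarrow> bool" where
  "good V A sigma k t \<longleftrightarrow>
     (\<forall>(x, y) \<in> A. forward sigma x y) \<and>
     (\<forall>v \<in> seg sigma 1 (int (card V) - int t). k \<le> out_deg A v) \<and>
     (\<forall>v \<in> seg sigma (int t + 1) (int (card V)). k \<le> in_deg A v)"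

definition dpath :: "'a set \<Rightarrow> ('a \<times> 'a) set \<Rightarrow> 'a list \<Rightarrow> bool" where
  "dpath V A p \<longleftrightarrow> p \<noteq> [] \<and> distinct p \<and> set p \<subseteq> V \<and>
     (\<forall>i. Suc i < length p \<longrightarrow> (p ! i, p ! Suc i) \<in> A)"

definition del_verts :: "'a set \<Rightarrow> ('a \<times> 'a) set \<Rightarrow> 'a set \<Rightarrow> 'a set \<times> ('a \<times> 'a) set" where
  "del_verts V A S = (V - S, A \<inter> ((V - S) \<times> (V - S)))"

end

theory Submission
  imports Defs
begin

text \<open>All arcs go forward along \<open>\<sigma>\<close>. A vertex outside \<open>\<sigma>(n-t+1,n)\<close> has at least \<open>k\<close>
  out-neighbours, so one of them survives the deletion of \<open>k - 1\<close> vertices; repeatedly moving to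
  such a neighbour strictly increases the position in \<open>\<sigma>\<close>, hence yields a path that must stop in
  \<open>\<sigma>(n-t+1,n)\<close>. The path into \<open>v\<close> is the same argument for in-neighbours, run on the converse
  digraph and reversed.\<close>

text \<open>The 0-based position of \<open>x\<close> in \<open>sigma\<close> (unspecified for \<open>x \<notin> set sigma\<close>); note that
  \<open>seg\<close> counts positions from 1.\<close>
definition pos :: "'a list \<Rightarrow> 'a \<Rightarrow> nat" where
  "pos sigma x = the_inv_into {..<length sigma} ((!) sigma) x"

lemma pos_nth:
  assumes "distinct sigma" "i < length sigma"
  shows "pos sigma (sigma ! i) = i"
  unfolding pos_def
  using assms by (intro the_inv_into_f_f) (auto simp: inj_on_def nth_eq_iff_index_eq)

lemma pos_less_length:
  assumes "distinct sigma" "x \<in> set sigma"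
  shows "pos sigma x < length sigma"
  using assms by (auto simp: in_set_conv_nth pos_nth)

lemma nth_pos:
  assumes "distinct sigma" "x \<in> set sigma"
  shows "sigma ! pos sigma x = x"
  using assms by (auto simp: in_set_conv_nth pos_nth)

lemma pos_less_if_forward:
  assumes "distinct sigma" "forward sigma x y"
  shows "pos sigma x < pos sigma y"
  using assms by (auto simp: forward_def pos_nth)

lemma mem_seg_iff_pos:
  assumes "distinct sigma" "x \<in> set sigma"
  shows "x \<in> seg sigma a b \<longleftrightarrow> a \<le> int (pos sigma x) + 1 \<and> int (pos sigma x) + 1 \<le> b"
proof
  assume "x \<in> seg sigma a b"
  then obtain l where "x = sigma ! nat (l - 1)" "a \<le> l" "l \<le> b" "1 \<le> l" "l \<le> int (length sigma)"
    by (auto simp: seg_def)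
  moreover have "pos sigma x = nat (l - 1)"
    using calculation assms(1) by (simp add: pos_nth)
  ultimately show "a \<le> int (pos sigma x) + 1 \<and> int (pos sigma x) + 1 \<le> b" by simp
next
  assume "a \<le> int (pos sigma x) + 1 \<and> int (pos sigma x) + 1 \<le> b"
  then show "x \<in> seg sigma a b"
    using pos_less_length[OF assms] nth_pos[OF assms] unfolding seg_def
    by (intro CollectI exI[of _ "int (pos sigma x) + 1"]) auto
qed

lemma mem_seg_split:
  assumes "distinct sigma" "x \<in> set sigma"
  shows "x \<in> seg sigma 1 m \<or> x \<in> seg sigma (m + 1) (int (length sigma))"
  using pos_less_length[OF assms] by (auto simp: mem_seg_iff_pos[OF assms])

lemma dpath_Cons:
  assumes "dpath V A p" "(v, hd p) \<in> A" "v \<in> V" "v \<notin> set p"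
  shows "dpath V A (v # p)"
  using assms unfolding dpath_def
  by (auto simp: nth_Cons hd_conv_nth split: nat.split)

lemma dpath_rev:
  assumes "dpath V A p"
  shows "dpath V (A\<inverse>) (rev p)"
  unfolding dpath_def
proof (intro conjI allI impI)
  fix i assume i: "Suc i < length (rev p)"
  have "(p ! (length p - Suc (Suc i)), p ! Suc (length p - Suc (Suc i))) \<in> A"
    using assms i by (simp add: dpath_def)
  moreover have "Suc (length p - Suc (Suc i)) = length p - Suc i" using i by simp
  ultimately show "(rev p ! i, rev p ! Suc i) \<in> A\<inverse>" using i by (simp add: rev_nth)
qed (use assms in \<open>auto simp: dpath_def\<close>)

lemma dpath_to_target_exists:
  fixes f :: "'a \<Rightarrow> nat"
  assumes decreasing: "\<And>x y. (x, y) \<in> A \<Longrightarrow> f y < f x"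
    and step: "\<And>x. x \<in> V \<Longrightarrow> x \<notin> T \<Longrightarrow> \<exists>y\<in>V. (x, y) \<in> A"
    and "v \<in> V"
  shows "\<exists>p. dpath V A p \<and> hd p = v \<and> last p \<in> T"
proof -
  have "\<exists>p. dpath V A p \<and> hd p = v \<and> last p \<in> T \<and> (\<forall>x\<in>set p. f x \<le> f v)"
    using \<open>v \<in> V\<close>
  proof (induction "f v" arbitrary: v rule: less_induct)
    case less
    show ?case
    proof (cases "v \<in> T")
      case True
      then show ?thesis using less.prems by (intro exI[of _ "[v]"]) (simp add: dpath_def)
    next
      case False
      then obtain y where y: "y \<in> V" "(v, y) \<in> A" using step less.prems by blast
      have "f y < f v" using y(2) by (rule decreasing)
      then obtain p where p: "dpath V A p" "hd p = y" "last p \<in> T" "\<forall>x\<in>set p. f x \<le> f y"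
        using less.hyps[OF \<open>f y < f v\<close> y(1)] by blast
      have "v \<notin> set p"
      proof
        assume "v \<in> set p"
        with p(4) have "f v \<le> f y" by blast
        with \<open>f y < f v\<close> show False by simp
      qed
      have "dpath V A (v # p)"
        by (rule dpath_Cons[OF p(1)]) (use p(2) y(2) less.prems \<open>v \<notin> set p\<close> in simp_all)
      moreover have "\<forall>x\<in>set (v # p). f x \<le> f v"
        using p(4) \<open>f y < f v\<close> by fastforce
      moreover have "p \<noteq> []" using p(1) by (simp add: dpath_def)
      ultimately show ?thesis using p(3) by (intro exI[of _ "v # p"]) simp
    qed
  qed
  then show ?thesis by blast
qed

lemma exists_notin_of_card_less:
  assumes "finite S" "card S < card N"
  shows "\<exists>x\<in>N. x \<notin> S"
  using assms card_mono leD by blast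

lemma good_arc_pos_less:
  assumes "is_ordering sigma V" "good V A sigma k t" "(x, y) \<in> A"
  shows "pos sigma x < pos sigma y"
  using assms by (auto simp: is_ordering_def good_def intro: pos_less_if_forward)

lemma good_out_neighbour_avoiding:
  assumes "digraph V A" "is_ordering sigma V" "good V A sigma k t"
    and "S \<subseteq> V" "card S < k"
    and "x \<in> V" "x \<notin> seg sigma (int (card V) - int t + 1) (int (card V))"
  shows "\<exists>y\<in>V - S. (x, y) \<in> A"
proof -
  have "length sigma = card V"
    using assms(2) by (metis distinct_card is_ordering_def)
  then have "x \<in> seg sigma 1 (int (card V) - int t)"
    using mem_seg_split[of sigma x "int (card V) - int t"] assms(2,6,7)
    by (auto simp: is_ordering_def)
  then have "k \<le> out_deg A x"
    using assms(3) by (simp add: good_def)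
  then have "card S < card {y. (x, y) \<in> A}"
    using assms(5) by (simp add: out_deg_def)
  moreover have "finite S" using assms(1,4) finite_subset by (auto simp: digraph_def)
  ultimately obtain y where "(x, y) \<in> A" "y \<notin> S"
    using exists_notin_of_card_less by blast
  then show ?thesis using assms(1) by (auto simp: digraph_def)
qed

lemma good_in_neighbour_avoiding:
  assumes "digraph V A" "is_ordering sigma V" "good V A sigma k t"
    and "S \<subseteq> V" "card S < k"
    and "x \<in> V" "x \<notin> seg sigma 1 (int t)"
  shows "\<exists>y\<in>V - S. (y, x) \<in> A"
proof -
  have "length sigma = card V"
    using assms(2) by (metis distinct_card is_ordering_def)
  then have "x \<in> seg sigma (int t + 1) (int (card V))"
    using mem_seg_split[of sigma x "int t"] assms(2,6,7)
    by (auto simp: is_ordering_def)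
  then have "k \<le> in_deg A x"
    using assms(3) by (simp add: good_def)
  then have "card S < card {y. (y, x) \<in> A}"
    using assms(5) by (simp add: in_deg_def)
  moreover have "finite S" using assms(1,4) finite_subset by (auto simp: digraph_def)
  ultimately obtain y where "(y, x) \<in> A" "y \<notin> S"
    using exists_notin_of_card_less by blast
  then show ?thesis using assms(1) by (auto simp: digraph_def)
qed

lemma good_dpath_to_end:
  assumes "digraph V A" "is_ordering sigma V" "good V A sigma k t"
    and "S \<subseteq> V" "card S < k" "v \<in> V - S"
  shows "\<exists>p. dpath (V - S) (A \<inter> ((V - S) \<times> (V - S))) p \<and> hd p = v \<and>
           last p \<in> seg sigma (int (card V) - int t + 1) (int (card V))"
proof (rule dpath_to_target_exists[where f = "\<lambda>x. length sigma - pos sigma x"])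
  fix x y assume xy: "(x, y) \<in> A \<inter> ((V - S) \<times> (V - S))"
  then have "pos sigma y < length sigma"
    using assms(2) pos_less_length by (auto simp: is_ordering_def)
  moreover have "pos sigma x < pos sigma y"
    using xy good_arc_pos_less[OF assms(2,3)] by blast
  ultimately show "length sigma - pos sigma y < length sigma - pos sigma x" by linarith
next
  fix x assume x: "x \<in> V - S" "x \<notin> seg sigma (int (card V) - int t + 1) (int (card V))"
  then obtain y where "y \<in> V - S" "(x, y) \<in> A"
    using good_out_neighbour_avoiding[OF assms(1-5)] by blast
  with x(1) show "\<exists>y\<in>V - S. (x, y) \<in> A \<inter> ((V - S) \<times> (V - S))" by blast
qed (fact assms(6))

lemma good_dpath_from_start:
  assumes "digraph V A" "is_ordering sigma V" "good V A sigma k t"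
    and "S \<subseteq> V" "card S < k" "v \<in> V - S"
  shows "\<exists>q. dpath (V - S) (A \<inter> ((V - S) \<times> (V - S))) q \<and>
           hd q \<in> seg sigma 1 (int t) \<and> last q = v"
proof -
  have "\<exists>p. dpath (V - S) ((A \<inter> ((V - S) \<times> (V - S)))\<inverse>) p \<and> hd p = v \<and> last p \<in> seg sigma 1 (int t)"
  proof (rule dpath_to_target_exists[where f = "pos sigma"])
    fix x y assume "(x, y) \<in> (A \<inter> ((V - S) \<times> (V - S)))\<inverse>"
    then show "pos sigma y < pos sigma x"
      using good_arc_pos_less[OF assms(2,3)] by blast
  next
    fix x assume x: "x \<in> V - S" "x \<notin> seg sigma 1 (int t)"
    then obtain y where "y \<in> V - S" "(y, x) \<in> A"
      using good_in_neighbour_avoiding[OF assms(1-5)] by blast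
    with x(1) show "\<exists>y\<in>V - S. (x, y) \<in> (A \<inter> ((V - S) \<times> (V - S)))\<inverse>" by blast
  qed (fact assms(6))
  then obtain p where p: "dpath (V - S) ((A \<inter> ((V - S) \<times> (V - S)))\<inverse>) p"
    "hd p = v" "last p \<in> seg sigma 1 (int t)"
    by blast
  then have "p \<noteq> []" by (simp add: dpath_def)
  with p show ?thesis
    using dpath_rev[OF p(1)] by (intro exI[of _ "rev p"]) (simp add: hd_rev last_rev)
qed

theorem claim3p1:
  fixes V :: "'a set" and A :: "('a \<times> 'a) set" and sigma :: "'a list" and k t n :: nat
  assumes "0 < k" and "0 < t" and "k \<le> t"
    and "digraph V A" and "card V = n"
    and "is_ordering sigma V"
    and "good V A sigma k t"
  shows "\<forall>S v. S \<subseteq> V \<and> card S = k - 1 \<and> v \<in> V - S \<longrightarrow>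
           (\<exists>p. dpath (fst (del_verts V A S)) (snd (del_verts V A S)) p \<and>
                hd p = v \<and> last p \<in> seg sigma (int n - int t + 1) (int n)) \<and>
           (\<exists>q. dpath (fst (del_verts V A S)) (snd (del_verts V A S)) q \<and>
                hd q \<in> seg sigma 1 (int t) \<and> last q = v)"
proof (intro allI impI)
  fix S v assume "S \<subseteq> V \<and> card S = k - 1 \<and> v \<in> V - S"
  with \<open>0 < k\<close> have "S \<subseteq> V" "card S < k" "v \<in> V - S" by auto
  from good_dpath_to_end[OF assms(4,6,7) this] good_dpath_from_start[OF assms(4,6,7) this]
  show "(\<exists>p. dpath (fst (del_verts V A S)) (snd (del_verts V A S)) p \<and>
                hd p = v \<and> last p \<in> seg sigma (int n - int t + 1) (int n)) \<and>
           (\<exists>q. dpath (fst (del_verts V A S)) (snd (del_verts V A S)) q \<and>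
                hd q \<in> seg sigma 1 (int t) \<and> last q = v)"
    by (simp add: del_verts_def assms(5))
qed

end
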